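(* Let $N = \{1,\dots,n\}$ with $n \geq 2$, and for each $i \in N$ let $\pi_i : 2^{N \setminus\{i\}} \to \mathbb{R}_{\geq 0}$. For any directed graph $G = (N,A)$ (possibly cyclic) put $\pi^*(G) = \prod_{i} \pi_i(A_i)$ with $A_i = \{j : ji \in A\}$, and let $\pi(G) = \pi^*(G)$ if $G$ is acyclic and $\pi(G) = 0$ otherwise. Let $(q_{ij})$ be a probability distribution over ordered pairs $(i,j)$ of distinct nodes. For a DAG $G$ and ordered pair $ij$, let $G^{ij}$ be obtained from $G$ by removing arc $ij$ if $ij \in A$, by reversing arc $ji$ into $ij$ if $ji \in A$, and by adding arc $ij$ otherwise. For a DAG $G$ with $\pi(G) > 0$ define $b_{ij} = q_{ij}\min\{1, \pi^*(G^{ij})/\pi(G)\}$ and $b = \sum_{ij} b_{ij}$, and define a Markov chain on $\Omega = \{G \text{ DAG on } N : \pi(G) > 0\}$ as follows: from state $G$, with probability $1-b$ stay at $G$; with probability $b$, draw a pair $ij$ with probability $b_{ij}/b$ and move to $G^{ij}$ if $G^{ij}$ is acyclic, otherwise stay at $G$. Assume: (1) $\pi(G) > 0$ for every DAG $G$ with exactly one arc; (2) every DAG $G$ with $\pi(G) > 0$ and at least one arc has an arc whose removal yields a DAG $G'$ with $\pi(G') > 0$; (3) $q_{ij} > 0$ for all ordered pairs $ij$; (4) $q_{ij} = q_{ji}$ for all pairs. Then the chain is irreducible and aperiodic on $\Omega$, and the distribution $\pi(G)/Z$ with $Z = \sum_{G} \pi(G)$ (sum over all DAGs on $N$) is a stationary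 distribution satisfying detailed balance; consequently the chain converges to $\pi/Z$ from any initial state in $\Omega$.
   Context: A DAG is a directed acyclic graph; directed graphs here have no self-loops and at most one arc per ordered pair. Note that $b \leq \sum_{ij} q_{ij} = 1$, so the transition rule is well defined. *)

theory Defs
  imports Complex_Main
begin

definition Nodes :: "nat \<Rightarrow> nat set" where
  "Nodes n = {1..n}"

definition Pairs :: "nat \<Rightarrow> (nat \<times> nat) set" where
  "Pairs n = {(i,j). i \<in> Nodes n \<and> j \<in> Nodes n \<and> i \<noteq> j}"

definition parents :: "(nat \<times> nat) set \<Rightarrow> nat \<Rightarrow> nat set" where
  "parents A i = {j. (j,i) \<in> A}"

definition pistar :: "nat \<Rightarrow> (nat \<Rightarrow> nat set \<Rightarrow> real) \<Rightarrow> (nat \<times> nat) set \<Rightarrow> real" where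
  "pistar n pr A = (\<Prod>i\<in>Nodes n. pr i (parents A i))"

definition piG :: "nat \<Rightarrow> (nat \<Rightarrow> nat set \<Rightarrow> real) \<Rightarrow> (nat \<times> nat) set \<Rightarrow> real" where
  "piG n pr A = (if acyclic A then pistar n pr A else 0)"

definition DAGs :: "nat \<Rightarrow> (nat \<times> nat) set set" where
  "DAGs n = {A. A \<subseteq> Pairs n \<and> acyclic A}"

definition Omega :: "nat \<Rightarrow> (nat \<Rightarrow> nat set \<Rightarrow> real) \<Rightarrow> (nat \<times> nat) set set" where
  "Omega n pr = {A \<in> DAGs n. piG n pr A > 0}"

definition Zconst :: "nat \<Rightarrow> (nat \<Rightarrow> nat set \<Rightarrow> real) \<Rightarrow> real" where
  "Zconst n pr = (\<Sum>A\<in>DAGs n. piG n pr A)"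

definition flip :: "(nat \<times> nat) set \<Rightarrow> nat \<times> nat \<Rightarrow> (nat \<times> nat) set" where
  "flip A p = (case p of (i,j) \<Rightarrow>
     if (i,j) \<in> A then A - {(i,j)}
     else if (j,i) \<in> A then insert (i,j) (A - {(j,i)})
     else insert (i,j) A)"

definition bij :: "nat \<Rightarrow> (nat \<Rightarrow> nat set \<Rightarrow> real) \<Rightarrow> (nat \<Rightarrow> nat \<Rightarrow> real)
                   \<Rightarrow> (nat \<times> nat) set \<Rightarrow> nat \<times> nat \<Rightarrow> real" where
  "bij n pr q G p = (case p of (i,j) \<Rightarrow>
      q i j * min 1 (pistar n pr (flip G (i,j)) / piG n pr G))"

text \<open>One-step transition probability from state G to state H: with probability
  b_{ij} the pair ij is drawn (i.e. b * b_{ij}/b), and the chain moves to G^{ij} if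
  it is acyclic; otherwise (and with probability 1 - b) it stays at G.\<close>
definition Ptrans :: "nat \<Rightarrow> (nat \<Rightarrow> nat set \<Rightarrow> real) \<Rightarrow> (nat \<Rightarrow> nat \<Rightarrow> real)
                   \<Rightarrow> (nat \<times> nat) set \<Rightarrow> (nat \<times> nat) set \<Rightarrow> real" where
  "Ptrans n pr q G H =
     (\<Sum>p\<in>Pairs n. if flip G p = H \<and> acyclic (flip G p) then bij n pr q G p else 0)
     + (if H = G then
          (1 - (\<Sum>p\<in>Pairs n. bij n pr q G p))
          + (\<Sum>p\<in>Pairs n. if \<not> acyclic (flip G p) then bij n pr q G p else 0)
        else 0)"

fun Pn :: "nat \<Rightarrow> (nat \<Rightarrow> nat set \<Rightarrow> real) \<Rightarrow> (nat \<Rightarrow> nat \<Rightarrow> real) \<Rightarrow> nat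
             \<Rightarrow> (nat \<times> nat) set \<Rightarrow> (nat \<times> nat) set \<Rightarrow> real" where
  "Pn n pr q 0 G H = (if G = H then 1 else 0)"
| "Pn n pr q (Suc t) G H = (\<Sum>K\<in>Omega n pr. Pn n pr q t G K * Ptrans n pr q K H)"

definition irreducible_chain :: "nat \<Rightarrow> (nat \<Rightarrow> nat set \<Rightarrow> real) \<Rightarrow> (nat \<Rightarrow> nat \<Rightarrow> real) \<Rightarrow> bool" where
  "irreducible_chain n pr q \<longleftrightarrow>
     (\<forall>G\<in>Omega n pr. \<forall>H\<in>Omega n pr. \<exists>t. Pn n pr q t G H > 0)"

definition aperiodic_chain :: "nat \<Rightarrow> (nat \<Rightarrow> nat set \<Rightarrow> real) \<Rightarrow> (nat \<Rightarrow> nat \<Rightarrow> real) \<Rightarrow> bool" where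
  "aperiodic_chain n pr q \<longleftrightarrow>
     (\<forall>G\<in>Omega n pr. Gcd {t. t > 0 \<and> Pn n pr q t G G > 0} = 1)"

definition is_distribution :: "nat \<Rightarrow> (nat \<Rightarrow> nat set \<Rightarrow> real) \<Rightarrow> ((nat \<times> nat) set \<Rightarrow> real) \<Rightarrow> bool" where
  "is_distribution n pr mu \<longleftrightarrow>
     (\<forall>G\<in>Omega n pr. mu G \<ge> 0) \<and> (\<Sum>G\<in>Omega n pr. mu G) = 1"

definition stationary :: "nat \<Rightarrow> (nat \<Rightarrow> nat set \<Rightarrow> real) \<Rightarrow> (nat \<Rightarrow> nat \<Rightarrow> real)
                          \<Rightarrow> ((nat \<times> nat) set \<Rightarrow> real) \<Rightarrow> bool" where
  "stationary n pr q mu \<longleftrightarrow>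
     is_distribution n pr mu \<and>
     (\<forall>H\<in>Omega n pr. (\<Sum>G\<in>Omega n pr. mu G * Ptrans n pr q G H) = mu H)"

definition detailed_balance :: "nat \<Rightarrow> (nat \<Rightarrow> nat set \<Rightarrow> real) \<Rightarrow> (nat \<Rightarrow> nat \<Rightarrow> real)
                          \<Rightarrow> ((nat \<times> nat) set \<Rightarrow> real) \<Rightarrow> bool" where
  "detailed_balance n pr q mu \<longleftrightarrow>
     (\<forall>G\<in>Omega n pr. \<forall>H\<in>Omega n pr. mu G * Ptrans n pr q G H = mu H * Ptrans n pr q H G)"

end

theory Submission
  imports Defs
begin

text \<open>The chain is a Metropolis chain for the symmetric proposal q: the flow
  pi(G) b_ij along a move G -> G^ij equals q_ij min(pi(G), pi(G^ij)), and the move is undone by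
  the pair ij or ji, so pi satisfies detailed balance and is stationary. Deleting arcs one at a
  time (assumption 2) connects every state to the empty graph and back, and the empty graph lies
  on closed walks of lengths 2 and 3 through one-arc graphs (assumption 1). Hence a fixed power
  of the transition matrix is strictly positive, which gives irreducibility, aperiodicity and,
  by Doeblin's contraction of column oscillations, convergence to pi/Z.\<close>

fun trans_pow :: "'a set \<Rightarrow> ('a \<Rightarrow> 'a \<Rightarrow> real) \<Rightarrow> nat \<Rightarrow> 'a \<Rightarrow> 'a \<Rightarrow> real" where
  "trans_pow S P 0 x y = (if x = y then 1 else 0)"
| "trans_pow S P (Suc t) x y = (\<Sum>z\<in>S. trans_pow S P t x z * P z y)"

declare trans_pow.simps(2) [simp del]

lemma Gcd_nat_eq_one_if_consecutive:
  fixes A :: "nat set"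
  assumes "a \<in> A" and "Suc a \<in> A"
  shows "Gcd A = 1"
proof -
  have "Gcd A dvd Suc a - a"
    using assms by (intro dvd_diff_nat) (simp_all add: Gcd_dvd)
  then show ?thesis by simp
qed

lemma convex_sum_le_term_plus_bound:
  fixes w f :: "'a \<Rightarrow> real"
  assumes "finite S" and "y \<in> S" and "\<And>x. x \<in> S \<Longrightarrow> 0 \<le> w x" and "(\<Sum>x\<in>S. w x) = 1"
    and "\<And>x. x \<in> S \<Longrightarrow> f x \<le> B"
  shows "(\<Sum>x\<in>S. w x * f x) \<le> w y * f y + (1 - w y) * B"
proof -
  have "(\<Sum>x\<in>S. w x * f x) = w y * f y + (\<Sum>x\<in>S - {y}. w x * f x)"
    using sum.remove[OF assms(1,2)] .
  also have "(\<Sum>x\<in>S - {y}. w x * f x) \<le> (\<Sum>x\<in>S - {y}. w x) * B"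
    unfolding sum_distrib_right using assms(3,5) by (intro sum_mono mult_left_mono) auto
  also have "(\<Sum>x\<in>S - {y}. w x) = 1 - w y"
    using sum.remove[OF assms(1,2), of w] assms(4) by simp
  finally show ?thesis by simp
qed

lemma convex_sum_ge_term_plus_bound:
  fixes w f :: "'a \<Rightarrow> real"
  assumes "finite S" and "y \<in> S" and "\<And>x. x \<in> S \<Longrightarrow> 0 \<le> w x" and "(\<Sum>x\<in>S. w x) = 1"
    and "\<And>x. x \<in> S \<Longrightarrow> A \<le> f x"
  shows "w y * f y + (1 - w y) * A \<le> (\<Sum>x\<in>S. w x * f x)"
  using convex_sum_le_term_plus_bound[OF assms(1-4), of "\<lambda>x. - f x" "- A"] assms(5)
  by (simp add: sum_negf)

locale stochastic_matrix =
  fixes S :: "'a set" and P :: "'a \<Rightarrow> 'a \<Rightarrow> real"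
  assumes finite_states: "finite S"
    and P_nonneg: "x \<in> S \<Longrightarrow> y \<in> S \<Longrightarrow> 0 \<le> P x y"
    and P_row_sum: "x \<in> S \<Longrightarrow> (\<Sum>y\<in>S. P x y) = 1"
begin

abbreviation P_pow :: "nat \<Rightarrow> 'a \<Rightarrow> 'a \<Rightarrow> real" where
  "P_pow \<equiv> trans_pow S P"

lemma P_pow_1:
  assumes "x \<in> S"
  shows "P_pow 1 x y = P x y"
proof -
  have "P_pow 1 x y = (\<Sum>z\<in>S. if x = z then P z y else 0)"
    by (auto simp: trans_pow.simps intro: sum.cong)
  then show ?thesis using assms finite_states by simp
qed

lemma P_pow_nonneg: "y \<in> S \<Longrightarrow> 0 \<le> P_pow t x y"
  by (induction t arbitrary: y)
    (auto simp: trans_pow.simps intro!: sum_nonneg mult_nonneg_nonneg P_nonneg)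

lemma P_pow_add: "y \<in> S \<Longrightarrow> P_pow (s + t) x y = (\<Sum>z\<in>S. P_pow s x z * P_pow t z y)"
proof (induction t arbitrary: y)
  case 0
  then show ?case using finite_states by (simp add: if_distrib sum.delta' cong: if_cong)
next
  case (Suc t)
  have "P_pow (s + Suc t) x y = (\<Sum>w\<in>S. (\<Sum>z\<in>S. P_pow s x z * P_pow t z w) * P w y)"
    using Suc.IH by (auto simp: trans_pow.simps intro: sum.cong)
  also have "\<dots> = (\<Sum>z\<in>S. P_pow s x z * (\<Sum>w\<in>S. P_pow t z w * P w y))"
    by (simp add: sum_distrib_left sum_distrib_right mult.assoc) (rule sum.swap)
  finally show ?case by (simp add: trans_pow.simps)
qed

lemma P_pow_row_sum: "x \<in> S \<Longrightarrow> (\<Sum>y\<in>S. P_pow t x y) = 1"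
proof (induction t)
  case 0
  then show ?case using finite_states by simp
next
  case (Suc t)
  have "(\<Sum>y\<in>S. P_pow (Suc t) x y) = (\<Sum>z\<in>S. P_pow t x z * (\<Sum>y\<in>S. P z y))"
    by (simp add: trans_pow.simps sum_distrib_left) (rule sum.swap)
  also have "\<dots> = 1" using Suc P_row_sum by simp
  finally show ?case .
qed

lemma P_pow_le_1: "x \<in> S \<Longrightarrow> y \<in> S \<Longrightarrow> P_pow t x y \<le> 1"
  using member_le_sum[of y S "P_pow t x"] P_pow_nonneg P_pow_row_sum finite_states by force

lemma P_pow_pos_add:
  assumes "z \<in> S" and "y \<in> S" and "0 < P_pow s x z" and "0 < P_pow t z y"
  shows "0 < P_pow (s + t) x y"
proof -
  have "0 < P_pow s x z * P_pow t z y" using assms(3,4) by simp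
  also have "\<dots> \<le> (\<Sum>w\<in>S. P_pow s x w * P_pow t w y)"
    using assms(1,2) finite_states P_pow_nonneg
    by (intro member_le_sum) (auto intro: mult_nonneg_nonneg)
  finally show ?thesis using P_pow_add[OF assms(2)] by simp
qed

lemma P_pow_diag_pos_if_2_3:
  assumes "x \<in> S" and "0 < P_pow 2 x x" and "0 < P_pow 3 x x" and "2 \<le> L"
  shows "0 < P_pow L x x"
  using assms(4)
proof (induction L rule: less_induct)
  case (less L)
  show ?case
  proof (cases "L \<le> 3")
    case True
    with less.prems have "L = 2 \<or> L = 3" by auto
    with assms(2,3) show ?thesis by auto
  next
    case False
    then have "0 < P_pow (L - 2 + 2) x x"
      using P_pow_pos_add[OF assms(1,1) less.IH[of "L - 2"] assms(2)] by simp
    then show ?thesis using less.prems by (simp only: le_add_diff_inverse2)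
  qed
qed

lemma invariant_if_reversible:
  assumes "\<And>x y. x \<in> S \<Longrightarrow> y \<in> S \<Longrightarrow> \<mu> x * P x y = \<mu> y * P y x" and "y \<in> S"
  shows "(\<Sum>x\<in>S. \<mu> x * P x y) = \<mu> y"
proof -
  have "(\<Sum>x\<in>S. \<mu> x * P x y) = \<mu> y * (\<Sum>x\<in>S. P y x)"
    using assms by (simp add: sum_distrib_left)
  then show ?thesis using P_row_sum[OF assms(2)] by simp
qed

lemma invariant_P_pow:
  assumes "\<And>y. y \<in> S \<Longrightarrow> (\<Sum>x\<in>S. \<mu> x * P x y) = \<mu> y" and "y \<in> S"
  shows "(\<Sum>x\<in>S. \<mu> x * P_pow t x y) = \<mu> y"
  using assms(2)
proof (induction t arbitrary: y)
  case 0
  then show ?case using finite_states by (simp add: if_distrib sum.delta cong: if_cong)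
next
  case (Suc t)
  have "(\<Sum>x\<in>S. \<mu> x * P_pow (Suc t) x y) = (\<Sum>z\<in>S. (\<Sum>x\<in>S. \<mu> x * P_pow t x z) * P z y)"
    by (simp add: trans_pow.simps sum_distrib_left sum_distrib_right mult.assoc) (rule sum.swap)
  also have "\<dots> = \<mu> y" using Suc assms(1) by simp
  finally show ?case .
qed

end

locale regular_stochastic_matrix = stochastic_matrix +
  fixes T :: nat
  assumes states_nonempty: "S \<noteq> {}"
    and P_pow_T_pos: "x \<in> S \<Longrightarrow> y \<in> S \<Longrightarrow> 0 < P_pow T x y"
begin

definition doeblin_const :: real where
  "doeblin_const = Min ((\<lambda>(x, y). P_pow T x y) ` (S \<times> S))"

definition col_min :: "nat \<Rightarrow> 'a \<Rightarrow> real" where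
  "col_min t y = Min ((\<lambda>x. P_pow t x y) ` S)"

definition col_max :: "nat \<Rightarrow> 'a \<Rightarrow> real" where
  "col_max t y = Max ((\<lambda>x. P_pow t x y) ` S)"

lemma doeblin_const_le: "x \<in> S \<Longrightarrow> y \<in> S \<Longrightarrow> doeblin_const \<le> P_pow T x y"
  unfolding doeblin_const_def using finite_states by (intro Min_le) auto

lemma doeblin_const_bounds: "0 < doeblin_const \<and> doeblin_const \<le> 1"
  unfolding doeblin_const_def using states_nonempty finite_states P_pow_T_pos P_pow_le_1
  by (auto simp: Min_gr_iff intro: Min.coboundedI[THEN order_trans])

lemma col_min_le: "x \<in> S \<Longrightarrow> col_min t y \<le> P_pow t x y"
  unfolding col_min_def using finite_states by simp

lemma col_max_ge: "x \<in> S \<Longrightarrow> P_pow t x y \<le> col_max t y"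
  unfolding col_max_def using finite_states by simp

lemma col_min_le_col_max: "col_min t y \<le> col_max t y"
  using states_nonempty col_min_le col_max_ge by (meson all_not_in_conv order_trans)

lemma col_min_attained: "\<exists>x\<in>S. P_pow t x y = col_min t y"
proof -
  have "col_min t y \<in> (\<lambda>x. P_pow t x y) ` S"
    unfolding col_min_def using finite_states states_nonempty by (intro Min_in) auto
  then show ?thesis by auto
qed

lemma col_max_attained: "\<exists>x\<in>S. P_pow t x y = col_max t y"
proof -
  have "col_max t y \<in> (\<lambda>x. P_pow t x y) ` S"
    unfolding col_max_def using finite_states states_nonempty by (intro Max_in) auto
  then show ?thesis by auto
qed

text \<open>Doeblin's argument: after \<open>T\<close> more steps every row puts weight at least
  \<open>doeblin_const\<close> on a state where column \<open>y\<close> is minimal (resp. maximal), which moves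
  each entry of the column a fixed fraction away from the old maximum (resp. minimum).\<close>
lemma P_pow_T_add_le:
  assumes "x \<in> S" and "y \<in> S"
  shows "P_pow (T + t) x y \<le> col_max t y - doeblin_const * (col_max t y - col_min t y)"
proof -
  obtain z where z: "z \<in> S" "P_pow t z y = col_min t y"
    using col_min_attained by blast
  have "P_pow (T + t) x y = (\<Sum>w\<in>S. P_pow T x w * P_pow t w y)"
    using P_pow_add[OF assms(2)] .
  also have "\<dots> \<le> P_pow T x z * P_pow t z y + (1 - P_pow T x z) * col_max t y"
    using finite_states z(1) P_pow_nonneg P_pow_row_sum[OF assms(1)] col_max_ge
    by (rule convex_sum_le_term_plus_bound)
  also have "\<dots> = col_max t y - P_pow T x z * (col_max t y - col_min t y)"
    using z(2) by (simp add: algebra_simps)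
  also have "\<dots> \<le> col_max t y - doeblin_const * (col_max t y - col_min t y)"
    using doeblin_const_le[OF assms(1) z(1)] col_min_le[OF z(1), of t y] col_max_ge[OF z(1), of t y]
    by (intro diff_left_mono mult_right_mono) auto
  finally show ?thesis .
qed

lemma P_pow_T_add_ge:
  assumes "x \<in> S" and "y \<in> S"
  shows "col_min t y + doeblin_const * (col_max t y - col_min t y) \<le> P_pow (T + t) x y"
proof -
  obtain z where z: "z \<in> S" "P_pow t z y = col_max t y"
    using col_max_attained by blast
  have "col_min t y + doeblin_const * (col_max t y - col_min t y)
      \<le> col_min t y + P_pow T x z * (col_max t y - col_min t y)"
    using doeblin_const_le[OF assms(1) z(1)] col_min_le[OF z(1), of t y] col_max_ge[OF z(1), of t y]
    by (intro add_left_mono mult_right_mono) auto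
  also have "\<dots> = P_pow T x z * P_pow t z y + (1 - P_pow T x z) * col_min t y"
    using z(2) by (simp add: algebra_simps)
  also have "\<dots> \<le> (\<Sum>w\<in>S. P_pow T x w * P_pow t w y)"
    using finite_states z(1) P_pow_nonneg P_pow_row_sum[OF assms(1)] col_min_le
    by (rule convex_sum_ge_term_plus_bound)
  also have "\<dots> = P_pow (T + t) x y"
    using P_pow_add[OF assms(2)] by simp
  finally show ?thesis .
qed

lemma col_osc_T_add:
  assumes "y \<in> S"
  shows "col_max (T + t) y - col_min (T + t) y \<le> (1 - doeblin_const) * (col_max t y - col_min t y)"
proof -
  obtain x where x: "x \<in> S" "P_pow (T + t) x y = col_max (T + t) y"
    using col_max_attained by blast
  obtain x' where x': "x' \<in> S" "P_pow (T + t) x' y = col_min (T + t) y"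
    using col_min_attained by blast
  have "col_max (T + t) y - col_min (T + t) y
      \<le> (1 - 2 * doeblin_const) * (col_max t y - col_min t y)"
    using P_pow_T_add_le[OF x(1) assms, of t] P_pow_T_add_ge[OF x'(1) assms, of t] x(2) x'(2)
    by (simp add: algebra_simps)
  also have "\<dots> \<le> (1 - doeblin_const) * (col_max t y - col_min t y)"
    using doeblin_const_bounds col_min_le_col_max by (intro mult_right_mono) auto
  finally show ?thesis .
qed

lemma col_osc_le_power:
  assumes "y \<in> S"
  shows "col_max (k * T + r) y - col_min (k * T + r) y \<le> (1 - doeblin_const) ^ k"
proof (induction k)
  case 0
  obtain x where "x \<in> S" "P_pow r x y = col_min r y"
    using col_min_attained by blast
  moreover obtain x' where "x' \<in> S" "P_pow r x' y = col_max r y"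
    using col_max_attained by blast
  ultimately have "0 \<le> col_min r y" and "col_max r y \<le> 1"
    using P_pow_nonneg[OF assms] P_pow_le_1[OF _ assms] by metis+
  then show ?case by simp
next
  case (Suc k)
  have "col_max (Suc k * T + r) y - col_min (Suc k * T + r) y
      \<le> (1 - doeblin_const) * (col_max (k * T + r) y - col_min (k * T + r) y)"
    using col_osc_T_add[OF assms, of "k * T + r"] by (simp add: add.assoc)
  also have "\<dots> \<le> (1 - doeblin_const) * (1 - doeblin_const) ^ k"
    using Suc.IH doeblin_const_bounds by (intro mult_left_mono) auto
  finally show ?case by simp
qed

lemma invariant_between_col_bounds:
  assumes "\<And>x. x \<in> S \<Longrightarrow> 0 \<le> \<mu> x" and "(\<Sum>x\<in>S. \<mu> x) = 1"
    and "\<And>y. y \<in> S \<Longrightarrow> (\<Sum>x\<in>S. \<mu> x * P x y) = \<mu> y" and "y \<in> S"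
  shows "col_min t y \<le> \<mu> y \<and> \<mu> y \<le> col_max t y"
proof -
  have "\<mu> y = (\<Sum>x\<in>S. \<mu> x * P_pow t x y)"
    using invariant_P_pow[OF assms(3,4)] by simp
  moreover have "(\<Sum>x\<in>S. \<mu> x * col_min t y) \<le> (\<Sum>x\<in>S. \<mu> x * P_pow t x y)"
    using assms(1) col_min_le by (intro sum_mono mult_left_mono) auto
  moreover have "(\<Sum>x\<in>S. \<mu> x * P_pow t x y) \<le> (\<Sum>x\<in>S. \<mu> x * col_max t y)"
    using assms(1) col_max_ge by (intro sum_mono mult_left_mono) auto
  ultimately show ?thesis using assms(2) by (simp add: sum_distrib_right[symmetric])
qed

theorem P_pow_tendsto_invariant:
  assumes "\<And>x. x \<in> S \<Longrightarrow> 0 \<le> \<mu> x" and "(\<Sum>x\<in>S. \<mu> x) = 1"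
    and "\<And>y. y \<in> S \<Longrightarrow> (\<Sum>x\<in>S. \<mu> x * P x y) = \<mu> y"
    and "x \<in> S" and "y \<in> S"
  shows "(\<lambda>t. P_pow t x y) \<longlonglongrightarrow> \<mu> y"
proof (rule LIMSEQ_I)
  fix \<epsilon> :: real
  assume "0 < \<epsilon>"
  moreover have "1 - doeblin_const < 1" using doeblin_const_bounds by auto
  ultimately obtain k where k: "(1 - doeblin_const) ^ k < \<epsilon>"
    using real_arch_pow_inv by blast
  have "norm (P_pow t x y - \<mu> y) < \<epsilon>" if "k * T \<le> t" for t
  proof -
    have "col_max t y - col_min t y \<le> (1 - doeblin_const) ^ k"
      using col_osc_le_power[OF assms(5), of k "t - k * T"] that by simp
    then show ?thesis
      using invariant_between_col_bounds[OF assms(1-3,5), of t]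
        col_min_le[OF assms(4), of t y] col_max_ge[OF assms(4), of t y] k
      by auto
  qed
  then show "\<exists>t0. \<forall>t\<ge>t0. norm (P_pow t x y - \<mu> y) < \<epsilon>" by blast
qed

end

lemma acyclic_arc_asym: "acyclic A \<Longrightarrow> (i, j) \<in> A \<Longrightarrow> (j, i) \<notin> A"
  unfolding acyclic_def by (meson r_into_trancl trancl_into_trancl)

lemma finite_Pairs: "finite (Pairs n)"
proof -
  have "Pairs n \<subseteq> Nodes n \<times> Nodes n" by (auto simp: Pairs_def)
  then show ?thesis by (rule finite_subset) (simp add: Nodes_def)
qed

lemma finite_DAGs: "finite (DAGs n)"
proof -
  have "DAGs n \<subseteq> Pow (Pairs n)" by (auto simp: DAGs_def)
  then show ?thesis using finite_Pairs by (meson finite_Pow_iff finite_subset)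
qed

lemma mem_Omega_iff: "A \<in> Omega n pr \<longleftrightarrow> A \<subseteq> Pairs n \<and> 0 < piG n pr A"
  by (auto simp: Omega_def DAGs_def piG_def split: if_splits)

lemma Omega_acyclic: "A \<in> Omega n pr \<Longrightarrow> acyclic A"
  by (simp add: Omega_def DAGs_def)

lemma finite_Omega: "finite (Omega n pr)"
  using finite_DAGs by (rule finite_subset[rotated]) (auto simp: Omega_def)

lemma flip_neq: "flip A p \<noteq> A"
  by (cases p) (auto simp: flip_def)

lemma flip_subset_Pairs: "A \<subseteq> Pairs n \<Longrightarrow> p \<in> Pairs n \<Longrightarrow> flip A p \<subseteq> Pairs n"
  by (cases p) (auto simp: flip_def Pairs_def)

lemma inj_on_flip: "inj_on (flip A) (Pairs n)"
proof (rule inj_onI)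
  fix p p' assume "p \<in> Pairs n" "p' \<in> Pairs n" "flip A p = flip A p'"
  then show "p = p'"
    by (cases p; cases p') (auto simp: flip_def Pairs_def split: if_splits)
qed

lemma flip_flip_acyclic:
  assumes "acyclic A"
  shows "flip (flip A p) p = A \<or> flip (flip A p) (prod.swap p) = A"
proof -
  obtain i j where p: "p = (i, j)" by (cases p)
  consider "(i, j) \<in> A" | "(j, i) \<in> A" | "(i, j) \<notin> A" "(j, i) \<notin> A" by blast
  then show ?thesis
  proof cases
    case 1
    then show ?thesis using acyclic_arc_asym[OF assms 1] by (simp add: p flip_def insert_absorb)
  next
    case 2
    moreover have "i \<noteq> j" using 2 assms by (auto simp: acyclic_def)
    ultimately show ?thesis using acyclic_arc_asym[OF assms 2] by (auto simp: p flip_def)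
  next
    case 3
    then show ?thesis by (simp add: p flip_def)
  qed
qed

locale dag_chain =
  fixes n :: nat and pr :: "nat \<Rightarrow> nat set \<Rightarrow> real" and q :: "nat \<Rightarrow> nat \<Rightarrow> real"
  assumes two_nodes: "n \<ge> 2"
    and pr_nonneg: "\<And>i S. i \<in> Nodes n \<Longrightarrow> S \<subseteq> Nodes n - {i} \<Longrightarrow> pr i S \<ge> 0"
    and q_sum_1: "(\<Sum>(i,j)\<in>Pairs n. q i j) = 1"
    and single_arc_pos: "\<And>i j. (i,j) \<in> Pairs n \<Longrightarrow> piG n pr {(i,j)} > 0"
    and arc_deletion: "\<And>A. A \<in> DAGs n \<Longrightarrow> piG n pr A > 0 \<Longrightarrow> A \<noteq> {} \<Longrightarrow>
               \<exists>e\<in>A. piG n pr (A - {e}) > 0"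
    and q_pos: "\<And>i j. (i,j) \<in> Pairs n \<Longrightarrow> q i j > 0"
    and q_sym: "\<And>i j. (i,j) \<in> Pairs n \<Longrightarrow> q i j = q j i"
begin

abbreviation "\<Omega> \<equiv> Omega n pr"
abbreviation "\<pi> \<equiv> piG n pr"
abbreviation "b \<equiv> Defs.bij n pr q"

lemma pistar_nonneg: "A \<subseteq> Pairs n \<Longrightarrow> 0 \<le> pistar n pr A"
  unfolding pistar_def
  by (rule prod_nonneg) (auto intro!: pr_nonneg simp: parents_def Pairs_def)

lemma piG_nonneg: "A \<subseteq> Pairs n \<Longrightarrow> 0 \<le> \<pi> A"
  using pistar_nonneg by (simp add: piG_def)

lemma b_nonneg_le_q:
  assumes "G \<in> \<Omega>" and "p \<in> Pairs n"
  shows "0 \<le> b G p \<and> b G p \<le> q (fst p) (snd p)"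
proof -
  obtain i j where p: "p = (i, j)" by (cases p)
  have "0 \<le> pistar n pr (flip G p)"
    using assms by (simp add: pistar_nonneg flip_subset_Pairs mem_Omega_iff)
  moreover have "0 < \<pi> G" using assms(1) by (simp add: mem_Omega_iff)
  ultimately have "0 \<le> min 1 (pistar n pr (flip G p) / \<pi> G)" by simp
  moreover have "0 < q i j" using q_pos assms(2) p by simp
  ultimately show ?thesis by (simp add: p bij_def mult_left_le)
qed

lemma b_pos:
  assumes "G \<in> \<Omega>" and "p \<in> Pairs n" and "flip G p \<in> \<Omega>"
  shows "0 < b G p"
proof -
  obtain i j where p: "p = (i, j)" by (cases p)
  have "0 < pistar n pr (flip G p)"
    using assms(3) Omega_acyclic[OF assms(3)] by (simp add: mem_Omega_iff piG_def)
  moreover have "0 < \<pi> G" using assms(1) by (simp add: mem_Omega_iff)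
  moreover have "0 < q i j" using q_pos assms(2) p by simp
  ultimately show ?thesis by (simp add: p bij_def)
qed

lemma b_eq_0_if_acyclic_notin_Omega:
  assumes "G \<in> \<Omega>" and "p \<in> Pairs n" and "acyclic (flip G p)" and "flip G p \<notin> \<Omega>"
  shows "b G p = 0"
proof -
  have sub: "flip G p \<subseteq> Pairs n"
    using assms(1,2) by (simp add: flip_subset_Pairs mem_Omega_iff)
  with assms(4) have "\<not> 0 < \<pi> (flip G p)" by (simp add: mem_Omega_iff)
  then have "pistar n pr (flip G p) = 0"
    using assms(3) pistar_nonneg[OF sub] by (simp add: piG_def)
  then show ?thesis by (cases p) (simp add: bij_def)
qed

lemma sum_b_le_1:
  assumes "G \<in> \<Omega>"
  shows "(\<Sum>p\<in>Pairs n. b G p) \<le> 1"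
proof -
  have "(\<Sum>p\<in>Pairs n. b G p) \<le> (\<Sum>p\<in>Pairs n. q (fst p) (snd p))"
    using b_nonneg_le_q[OF assms] by (intro sum_mono) blast
  then show ?thesis using q_sum_1 by (simp add: case_prod_beta')
qed

lemma Ptrans_nonneg:
  assumes "G \<in> \<Omega>"
  shows "0 \<le> Ptrans n pr q G H"
proof -
  have b: "0 \<le> b G p" if "p \<in> Pairs n" for p
    using b_nonneg_le_q[OF assms that] by blast
  have "0 \<le> (\<Sum>p\<in>Pairs n. if flip G p = H \<and> acyclic (flip G p) then b G p else 0)"
    and "0 \<le> (\<Sum>p\<in>Pairs n. if \<not> acyclic (flip G p) then b G p else 0)"
    using b by (simp_all add: sum_nonneg)
  with sum_b_le_1[OF assms] show ?thesis by (simp add: Ptrans_def)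
qed

lemma Ptrans_row_sum:
  assumes G: "G \<in> \<Omega>"
  shows "(\<Sum>H\<in>\<Omega>. Ptrans n pr q G H) = 1"
proof -
  let ?moves = "\<lambda>p. if flip G p \<in> \<Omega> then b G p else 0"
  let ?blocked = "\<lambda>p. if \<not> acyclic (flip G p) then b G p else 0"
  have moves: "(\<Sum>H\<in>\<Omega>. \<Sum>p\<in>Pairs n. if flip G p = H \<and> acyclic (flip G p) then b G p else 0)
      = (\<Sum>p\<in>Pairs n. ?moves p)"
  proof -
    have "(\<Sum>H\<in>\<Omega>. if flip G p = H \<and> acyclic (flip G p) then b G p else 0) = ?moves p" for p
      using finite_Omega Omega_acyclic[of "flip G p" n pr]
      by (cases "flip G p \<in> \<Omega>"; cases "acyclic (flip G p)") (simp_all add: sum.delta')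
    then show ?thesis by (subst sum.swap) simp
  qed
  have "(\<Sum>p\<in>Pairs n. b G p) = (\<Sum>p\<in>Pairs n. ?moves p) + (\<Sum>p\<in>Pairs n. ?blocked p)"
    unfolding sum.distrib[symmetric] using b_eq_0_if_acyclic_notin_Omega[OF G] Omega_acyclic
    by (intro sum.cong) auto
  then show ?thesis
    using G finite_Omega unfolding Ptrans_def sum.distrib moves by simp
qed

sublocale stochastic_matrix \<Omega> "Ptrans n pr q"
  using finite_Omega Ptrans_nonneg Ptrans_row_sum by unfold_locales

lemma Ptrans_flip:
  assumes "G \<in> \<Omega>" and "p \<in> Pairs n" and "flip G p \<in> \<Omega>"
  shows "Ptrans n pr q G (flip G p) = b G p"
proof -
  have "(\<Sum>p'\<in>Pairs n. if flip G p' = flip G p \<and> acyclic (flip G p') then b G p' else 0)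
      = (\<Sum>p'\<in>Pairs n. if p' = p then b G p' else 0)"
    using inj_on_flip[of G n] assms(2,3) Omega_acyclic
    by (intro sum.cong) (auto dest: inj_onD)
  then show ?thesis
    unfolding Ptrans_def using assms(2) finite_Pairs flip_neq by simp
qed

lemma Ptrans_eq_0_if_not_flip:
  "H \<noteq> G \<Longrightarrow> (\<And>p. p \<in> Pairs n \<Longrightarrow> flip G p \<noteq> H) \<Longrightarrow> Ptrans n pr q G H = 0"
  unfolding Ptrans_def by (auto intro!: sum.neutral)

lemma P_pow_1_flip_pos:
  assumes "G \<in> \<Omega>" and "p \<in> Pairs n" and "flip G p \<in> \<Omega>"
  shows "0 < P_pow 1 G (flip G p)"
  using assms P_pow_1 Ptrans_flip b_pos by simp

text \<open>Up to swapping i and j, which \<open>q_sym\<close> allows, the right-hand side is symmetric in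
  G and H: this is where detailed balance comes from.\<close>
lemma piG_mult_b:
  assumes "G \<in> \<Omega>" and "H \<in> \<Omega>" and "flip G (i, j) = H"
  shows "\<pi> G * b G (i, j) = q i j * min (\<pi> G) (\<pi> H)"
proof -
  have "0 < \<pi> G" using assms(1) by (simp add: mem_Omega_iff)
  moreover have "pistar n pr H = \<pi> H"
    using assms(2) by (simp add: piG_def Omega_acyclic)
  ultimately have "\<pi> G * min 1 (pistar n pr H / \<pi> G) = min (\<pi> G) (\<pi> H)"
    by (simp add: min_mult_distrib_left)
  then show ?thesis using assms(3) by (simp add: bij_def mult.left_commute)
qed

lemma piG_detailed_balance:
  assumes G: "G \<in> \<Omega>" and H: "H \<in> \<Omega>"
  shows "\<pi> G * Ptrans n pr q G H = \<pi> H * Ptrans n pr q H G"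
proof (cases "\<exists>p\<in>Pairs n. flip G p = H")
  case True
  then obtain i j where p: "(i, j) \<in> Pairs n" and GH: "flip G (i, j) = H" by auto
  obtain p' where p': "p' \<in> {(i, j), (j, i)}" and HG: "flip H p' = G"
    using flip_flip_acyclic[OF Omega_acyclic[OF G], of "(i, j)"] GH by auto
  have p'_Pairs: "p' \<in> Pairs n" and "q (fst p') (snd p') = q i j"
    using p' p q_sym[OF p] by (auto simp: Pairs_def)
  then have "\<pi> H * Ptrans n pr q H G = q i j * min (\<pi> H) (\<pi> G)"
    using Ptrans_flip[OF H p'_Pairs] piG_mult_b[OF H G, of "fst p'" "snd p'"] HG G by simp
  moreover have "\<pi> G * Ptrans n pr q G H = q i j * min (\<pi> G) (\<pi> H)"
    using Ptrans_flip[OF G p] piG_mult_b[OF G H GH] GH H by simp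
  ultimately show ?thesis by (simp add: min.commute)
next
  case False
  moreover have "\<not> (\<exists>p\<in>Pairs n. flip H p = G)"
  proof
    assume "\<exists>p\<in>Pairs n. flip H p = G"
    then obtain i j where "(i, j) \<in> Pairs n" and "flip H (i, j) = G" by auto
    then have "(i, j) \<in> Pairs n \<and> flip G (i, j) = H \<or> (j, i) \<in> Pairs n \<and> flip G (j, i) = H"
      using flip_flip_acyclic[OF Omega_acyclic[OF H], of "(i, j)"] by (auto simp: Pairs_def)
    with False show False by blast
  qed
  ultimately show ?thesis
    using Ptrans_eq_0_if_not_flip flip_neq by (metis mult_zero_right)
qed

lemma empty_in_Omega: "{} \<in> \<Omega>"
proof -
  have p: "(1, 2) \<in> Pairs n" using two_nodes by (auto simp: Pairs_def Nodes_def)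
  with single_arc_pos[OF p] have "{(1, 2)} \<in> \<Omega>" by (simp add: mem_Omega_iff)
  then have "{(1, 2)} \<in> DAGs n" by (simp add: Omega_def)
  from arc_deletion[OF this single_arc_pos[OF p]] have "0 < \<pi> {}" by auto
  then show ?thesis by (simp add: mem_Omega_iff)
qed

lemma Zconst_eq_sum_Omega: "Zconst n pr = (\<Sum>G\<in>\<Omega>. \<pi> G)"
proof -
  have "\<pi> G = 0" if "G \<in> DAGs n - \<Omega>" for G
    using that piG_nonneg[of G] by (auto simp: DAGs_def mem_Omega_iff)
  moreover have "\<Omega> \<subseteq> DAGs n" by (auto simp: Omega_def)
  ultimately show ?thesis
    unfolding Zconst_def by (intro sum.mono_neutral_right finite_DAGs) auto
qed

lemma Zconst_pos: "0 < Zconst n pr"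
proof -
  have "0 < \<pi> {}" using empty_in_Omega by (simp add: mem_Omega_iff)
  also have "\<dots> \<le> (\<Sum>G\<in>\<Omega>. \<pi> G)"
    using empty_in_Omega finite_Omega by (intro member_le_sum) (auto simp: mem_Omega_iff)
  finally show ?thesis by (simp add: Zconst_eq_sum_Omega)
qed

abbreviation "\<mu> \<equiv> \<lambda>G. \<pi> G / Zconst n pr"

lemma detailed_balance_mu: "detailed_balance n pr q \<mu>"
  unfolding detailed_balance_def using piG_detailed_balance by (simp add: field_simps)

lemma is_distribution_mu: "is_distribution n pr \<mu>"
  unfolding is_distribution_def using Zconst_pos
  by (auto simp: Zconst_eq_sum_Omega mem_Omega_iff sum_divide_distrib[symmetric])

lemma stationary_mu: "stationary n pr q \<mu>"
  unfolding stationary_def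
  using is_distribution_mu invariant_if_reversible[of \<mu>] detailed_balance_mu
  unfolding detailed_balance_def by blast

lemma Pn_eq_P_pow: "Pn n pr q t = P_pow t"
proof (induction t)
  case (Suc t)
  then show ?case by (simp add: fun_eq_iff trans_pow.simps)
qed (simp add: fun_eq_iff)

text \<open>Delete arcs one at a time (by \<open>arc_deletion\<close>), and add them back in reverse order.\<close>
lemma P_pow_card_to_from_empty:
  assumes "G \<in> \<Omega>"
  shows "0 < P_pow (card G) G {} \<and> 0 < P_pow (card G) {} G"
  using assms
proof (induction "card G" arbitrary: G)
  case 0
  then have "G = {}"
    using finite_Pairs by (auto simp: mem_Omega_iff dest: finite_subset)
  then show ?case by simp
next
  case (Suc m)
  have G: "G \<subseteq> Pairs n" "acyclic G" "0 < \<pi> G" and "G \<noteq> {}"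
    using Suc.prems Suc.hyps(2) Omega_acyclic by (auto simp: mem_Omega_iff)
  then have "G \<in> DAGs n" by (simp add: DAGs_def)
  then obtain e where e: "e \<in> G" and pe: "0 < \<pi> (G - {e})"
    using arc_deletion G(3) \<open>G \<noteq> {}\<close> by blast
  have G': "G - {e} \<in> \<Omega>" and eP: "e \<in> Pairs n"
    using G e pe by (auto simp: mem_Omega_iff)
  have card: "m = card (G - {e})"
    using Suc.hyps(2) e by (metis card_Diff_singleton diff_Suc_1)
  obtain i j where ij: "e = (i, j)" by (cases e)
  have "flip G e = G - {e}" and "flip (G - {e}) e = G"
    using e acyclic_arc_asym[OF G(2), of i j] by (auto simp: ij flip_def)
  then have "0 < P_pow 1 G (G - {e})" and "0 < P_pow 1 (G - {e}) G"
    using P_pow_1_flip_pos[OF Suc.prems eP] P_pow_1_flip_pos[OF G' eP] G' Suc.prems by simp_all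
  moreover have "0 < P_pow m (G - {e}) {} \<and> 0 < P_pow m {} (G - {e})"
    using Suc.hyps(1)[OF card G'] card by simp
  ultimately have "0 < P_pow (1 + m) G {} \<and> 0 < P_pow (m + 1) {} G"
    using P_pow_pos_add[OF G' empty_in_Omega] P_pow_pos_add[OF G' Suc.prems] by blast
  then show ?case using Suc.hyps(2) by simp
qed

text \<open>Closed walks of lengths 2 and 3 through the one-arc graphs: add an arc and delete it,
  or add it, reverse it and delete it.\<close>
lemma P_pow_empty_empty_pos:
  assumes "2 \<le> L"
  shows "0 < P_pow L {} {}"
proof -
  have p: "(1, 2) \<in> Pairs n" and p': "(2, 1) \<in> Pairs n"
    using two_nodes by (auto simp: Pairs_def Nodes_def)
  have E: "{(1, 2)} \<in> \<Omega>" and E': "{(2, 1)} \<in> \<Omega>"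
    using single_arc_pos[OF p] single_arc_pos[OF p'] p p' by (simp_all add: mem_Omega_iff)
  have add: "0 < P_pow 1 {} {(1, 2)}"
    using P_pow_1_flip_pos[OF empty_in_Omega p] E by (simp add: flip_def)
  have delete: "0 < P_pow 1 {(1, 2)} {}"
    using P_pow_1_flip_pos[OF E p] empty_in_Omega by (simp add: flip_def)
  have reverse: "0 < P_pow 1 {(1, 2)} {(2, 1)}"
    using P_pow_1_flip_pos[OF E p'] E' by (simp add: flip_def)
  have delete': "0 < P_pow 1 {(2, 1)} {}"
    using P_pow_1_flip_pos[OF E' p'] empty_in_Omega by (simp add: flip_def)
  have "0 < P_pow (1 + 1) {} {}"
    using P_pow_pos_add[OF E empty_in_Omega add delete] .
  moreover have "0 < P_pow (1 + 1 + 1) {} {}"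
    using P_pow_pos_add[OF E' empty_in_Omega P_pow_pos_add[OF E E' add reverse] delete'] .
  ultimately show ?thesis
    using P_pow_diag_pos_if_2_3[OF empty_in_Omega _ _ assms] by (simp add: numeral_eq_Suc)
qed

lemma P_pow_pos:
  assumes "G \<in> \<Omega>" and "H \<in> \<Omega>" and "2 * card (Pairs n) + 2 \<le> m"
  shows "0 < P_pow m G H"
proof -
  have "card G \<le> card (Pairs n)" and "card H \<le> card (Pairs n)"
    using assms(1,2) finite_Pairs by (auto simp: mem_Omega_iff intro: card_mono)
  then obtain L where L: "2 \<le> L" and m: "m = card G + L + card H"
    using assms(3) by (intro that[of "m - card G - card H"]) auto
  show ?thesis
    unfolding m using P_pow_card_to_from_empty[OF assms(1)] P_pow_card_to_from_empty[OF assms(2)]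
      P_pow_empty_empty_pos[OF L] empty_in_Omega assms(2)
    by (blast intro: P_pow_pos_add)
qed

sublocale regular_stochastic_matrix \<Omega> "Ptrans n pr q" "2 * card (Pairs n) + 2"
  using empty_in_Omega P_pow_pos[OF _ _ order_refl] by unfold_locales blast+

lemma irreducible: "irreducible_chain n pr q"
  unfolding irreducible_chain_def Pn_eq_P_pow using P_pow_T_pos by blast

lemma aperiodic: "aperiodic_chain n pr q"
  unfolding aperiodic_chain_def Pn_eq_P_pow
proof
  fix G assume G: "G \<in> \<Omega>"
  let ?T = "2 * card (Pairs n) + 2"
  have "0 < P_pow ?T G G" and "0 < P_pow (Suc ?T) G G"
    using P_pow_pos[OF G G] by simp_all
  then show "Gcd {t. 0 < t \<and> 0 < P_pow t G G} = 1"
    by (intro Gcd_nat_eq_one_if_consecutive[of ?T]) simp_all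
qed

lemma Pn_tendsto_mu: "G \<in> \<Omega> \<Longrightarrow> H \<in> \<Omega> \<Longrightarrow> (\<lambda>t. Pn n pr q t G H) \<longlonglongrightarrow> \<mu> H"
  unfolding Pn_eq_P_pow using is_distribution_mu stationary_mu
  by (intro P_pow_tendsto_invariant) (auto simp: is_distribution_def stationary_def)

end

theorem mainTheorem5:
  fixes n :: nat and pr :: "nat \<Rightarrow> nat set \<Rightarrow> real" and q :: "nat \<Rightarrow> nat \<Rightarrow> real"
  assumes n2: "n \<ge> 2"
    and pi_nonneg: "\<And>i S. i \<in> Nodes n \<Longrightarrow> S \<subseteq> Nodes n - {i} \<Longrightarrow> pr i S \<ge> 0"
    and q_distr: "(\<Sum>(i,j)\<in>Pairs n. q i j) = 1"
    and A1: "\<And>i j. (i,j) \<in> Pairs n \<Longrightarrow> piG n pr {(i,j)} > 0"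
    and A2: "\<And>A. A \<in> DAGs n \<Longrightarrow> piG n pr A > 0 \<Longrightarrow> A \<noteq> {} \<Longrightarrow>
               \<exists>e\<in>A. piG n pr (A - {e}) > 0"
    and A3: "\<And>i j. (i,j) \<in> Pairs n \<Longrightarrow> q i j > 0"
    and A4: "\<And>i j. (i,j) \<in> Pairs n \<Longrightarrow> q i j = q j i"
  shows "irreducible_chain n pr q
       \<and> aperiodic_chain n pr q
       \<and> stationary n pr q (\<lambda>G. piG n pr G / Zconst n pr)
       \<and> detailed_balance n pr q (\<lambda>G. piG n pr G / Zconst n pr)
       \<and> (\<forall>G0\<in>Omega n pr. \<forall>H\<in>Omega n pr.
            (\<lambda>t. Pn n pr q t G0 H) \<longlonglongrightarrow> piG n pr H / Zconst n pr)"
proof -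
  interpret dag_chain n pr q
    using assms by unfold_locales
  show ?thesis
    using irreducible aperiodic stationary_mu detailed_balance_mu Pn_tendsto_mu by blast
qed

end
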